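(* Consider the constrained online prediction problem and the \texttt{BanditQ} policy described in the context, run for a horizon of $T$ rounds with the constant parameter $V_t = V = \Theta(\sqrt{T})$ for all $t \ge 1$. Then for every protected user $i \in \mathcal{P}$ and every round $1 \le t \le T$, the state variable satisfies $Q_i(t) = O(T^{3/4})$, where the constant hidden in the $O(\cdot)$ does not depend on $T$, $t$ or the reward sequence (it may depend on $N$ and on the constant in $V=\Theta(\sqrt{T})$).
   Context: There are $N$ users. On each round $t=1,2,\dots$ an online policy chooses a probability vector $\bm{x}(t)=(x_1(t),\dots,x_N(t))$ in the standard simplex $\Delta_N=\{\bm{x}\in\mathbb{R}^N_{\ge 0}:\sum_i x_i=1\}$; afterwards an adversarially chosen reward vector $\bm{r}(t)=(r_1(t),\dots,r_N(t))\in[0,1]^N$ is revealed (full information), and the policy may use all past reward vectors to choose $\bm{x}(t+1)$. A subset $\mathcal{P}\subseteq[N]$ of protected users is given, with target rates $\lambda_i\in[0,1]$, $i\in\mathcal{P}$, satisfying $\sum_{i\in\mathcal{P}}\lambda_i\le 1$; set $\lambda_i=0$ for $i\notin\mathcal{P}$. The feasible set of stationary actions is $\Omega=\{\bm{x}^*\in\Delta_N : r_i(t)x^*_i\ge\lambda_i \text{ for all } i\in\mathcal{P} \text{ and all rounds } t\}$, which is assumed nonempty. The regret of a policy over $T$ rounds is $\mathrm{Regret}_T=\sup_{\bm{x}^*\in\Omega}\sum_{t=1}^T\sum_{i=1}^N r_i(t)\,(x_i^*-x_i(t))$. The \texttt{BanditQ} policy: for each $i\in\mathcal{P}$ maintain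 $Q_i(0)=0$ and $Q_i(t)=\max\big(0,\,Q_i(t-1)+\lambda_i-r_i(t)x_i(t)\big)$; for $i\notin\mathcal{P}$ set $Q_i(t)=0$ for all $t$. Given a non-negative parameter sequence $(V_t)_{t\ge1}$, define surrogate rewards $r'_i(t)=(Q_i(t-1)+V_t)\,r_i(t)$ for all $i\in[N]$. Starting from an arbitrary $\bm{x}(1)\in\Delta_N$, the policy updates by adaptive online gradient ascent: $\bm{x}(t+1)=\Pi_{\Delta_N}\Big(\bm{x}(t)+\bm{r}'(t)\big/\sqrt{2\sum_{\tau=1}^{t}\|\bm{r}'(\tau)\|_2^2}\Big)$, where $\Pi_{\Delta_N}$ denotes Euclidean projection onto $\Delta_N$. *)

theory Defs
  imports "HOL-Analysis.Analysis"
begin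

text \<open>Users are indexed by a finite type 'n; N = CARD('n).\<close>

definition prob_simplex :: "(real^'n::finite) set" where
  "prob_simplex = {x. (\<forall>i. 0 \<le> x $ i) \<and> (\<Sum>i\<in>UNIV. x $ i) = 1}"

definition feasible_set :: "'n set \<Rightarrow> ('n \<Rightarrow> real) \<Rightarrow> (nat \<Rightarrow> real^'n::finite) \<Rightarrow> (real^'n) set" where
  "feasible_set P lam r =
     {xs \<in> prob_simplex. \<forall>i\<in>P. \<forall>t\<ge>1. r t $ i * xs $ i \<ge> lam i}"

text \<open>State of BanditQ after t rounds: (x(t+1), Q(t), sum_{tau<=t} ||r'(tau)||^2).\<close>
fun banditq_state ::
  "'n set \<Rightarrow> ('n \<Rightarrow> real) \<Rightarrow> real \<Rightarrow> (nat \<Rightarrow> real^'n::finite) \<Rightarrow> real^'n \<Rightarrow> nat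
     \<Rightarrow> (real^'n) \<times> ('n \<Rightarrow> real) \<times> real" where
  "banditq_state P lam V r x1 0 = (x1, (\<lambda>i. 0), 0)"
| "banditq_state P lam V r x1 (Suc t) =
     (let (x, Q, G) = banditq_state P lam V r x1 t;
          rr = r (Suc t);
          r' = (\<chi> i. (Q i + V) * rr $ i);
          G' = G + (norm r')\<^sup>2;
          x' = closest_point prob_simplex (x + (1 / sqrt (2 * G')) *\<^sub>R r');
          Q' = (\<lambda>i. if i \<in> P then max 0 (Q i + lam i - rr $ i * x $ i) else 0)
      in (x', Q', G'))"

definition banditq_x where
  "banditq_x P lam V r x1 t = fst (banditq_state P lam V r x1 (t - 1))"

definition banditq_Q where
  "banditq_Q P lam V r x1 t = fst (snd (banditq_state P lam V r x1 t))"

end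

theory Submission
  imports Defs
begin

(* The squared queue length is a Lyapunov function: against a feasible x*, one round increases
   ||Q||^2 by at most 2 r'(t).(x* - x(t)) + 2V + N. Hence ||Q(t)||^2 is at most twice the regret of
   the adaptive gradient ascent on the surrogate rewards plus (2V + N) t, and that regret is at most
   (3/2) sqrt(2 sum ||r'||^2) <= (3/2) sqrt(2Nt) (max Q + V). By induction over t the queues stay
   below every K with 3 sqrt(2NT) (K + V) + (2V + N) T <= K^2; for V = O(sqrt T) the choice
   K = C T^(3/4) qualifies. *)

lemma closed_prob_simplex: "closed (prob_simplex :: (real^'n::finite) set)"
proof -
  have "prob_simplex = {x::real^'n. \<forall>i. 0 \<le> x $ i} \<inter> {x. (\<Sum>i\<in>UNIV. x $ i) = 1}"
    unfolding prob_simplex_def by auto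
  moreover have "closed {x::real^'n. \<forall>i. 0 \<le> x $ i}"
    by (intro closed_Collect_all closed_Collect_le continuous_intros)
  moreover have "closed {x::real^'n. (\<Sum>i\<in>UNIV. x $ i) = 1}"
    by (intro closed_Collect_eq continuous_intros)
  ultimately show ?thesis by (metis closed_Int)
qed

lemma convex_prob_simplex: "convex (prob_simplex :: (real^'n::finite) set)"
  unfolding convex_def prob_simplex_def
  by (auto simp: sum.distrib sum_distrib_left[symmetric])

lemma prob_simplex_nonempty: "(prob_simplex :: (real^'n::finite) set) \<noteq> {}"
proof -
  fix j :: 'n
  have "((\<chi> i. if i = j then 1 else 0) :: real^'n) \<in> prob_simplex"
    unfolding prob_simplex_def by auto
  then show ?thesis by auto
qed

lemma prob_simplex_nonneg: "x \<in> prob_simplex \<Longrightarrow> 0 \<le> x $ i"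
  unfolding prob_simplex_def by auto

lemma prob_simplex_sum: "x \<in> prob_simplex \<Longrightarrow> (\<Sum>i\<in>UNIV. x $ i) = 1"
  unfolding prob_simplex_def by auto

lemma prob_simplex_le_1: "x \<in> prob_simplex \<Longrightarrow> x $ i \<le> 1"
  by (metis prob_simplex_nonneg prob_simplex_sum UNIV_I finite member_le_sum)

lemma norm_vec_power2: "(norm (v::real^'n::finite))\<^sup>2 = (\<Sum>i\<in>UNIV. (v $ i)\<^sup>2)"
  unfolding power2_norm_eq_inner inner_vec_def by (simp add: power2_eq_square)

lemma prob_simplex_dist_power2_le_2:
  assumes "v \<in> prob_simplex" "w \<in> prob_simplex"
  shows "(norm (v - w))\<^sup>2 \<le> 2"
proof -
  have sq: "(a - b)\<^sup>2 \<le> a + b" if "0 \<le> a" "a \<le> 1" "0 \<le> b" "b \<le> 1" for a b :: real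
  proof -
    have "a * a \<le> a" "b * b \<le> b" "0 \<le> a * b"
      using that by (simp_all add: mult_left_le_one_le)
    then show ?thesis by (simp add: power2_eq_square algebra_simps)
  qed
  have "(v $ i - w $ i)\<^sup>2 \<le> v $ i + w $ i" for i
    using assms by (intro sq prob_simplex_nonneg prob_simplex_le_1)
  then have "(norm (v - w))\<^sup>2 \<le> (\<Sum>i\<in>UNIV. v $ i + w $ i)"
    unfolding norm_vec_power2 by (auto intro: sum_mono)
  also have "\<dots> = 2"
    using assms by (simp add: sum.distrib prob_simplex_sum)
  finally show ?thesis .
qed

lemma prob_simplex_inner_diff_ge:
  assumes "x \<in> prob_simplex" "u \<in> prob_simplex" "\<And>i. 0 \<le> c $ i \<and> c $ i \<le> 1"
  shows "- 1 \<le> c \<bullet> (u - x)"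
proof -
  have "c \<bullet> x \<le> (\<Sum>i\<in>UNIV. x $ i)"
    unfolding inner_vec_def using assms(3) prob_simplex_nonneg[OF assms(1)]
    by (intro sum_mono) (simp add: mult_left_le_one_le)
  moreover have "0 \<le> c \<bullet> u"
    unfolding inner_vec_def using assms(3) prob_simplex_nonneg[OF assms(2)] by (intro sum_nonneg) simp
  ultimately show ?thesis
    using prob_simplex_sum[OF assms(1)] by (simp add: inner_diff_right)
qed

lemma projected_gradient_step:
  fixes y g u :: "'a::{real_inner,heine_borel}"
  assumes "convex S" "closed S" "S \<noteq> {}" "u \<in> S" "0 < s"
  shows "g \<bullet> (u - y) \<le> s / 2 * ((norm (y - u))\<^sup>2 - (norm (closest_point S (y + (1 / s) *\<^sub>R g) - u))\<^sup>2)
           + (norm g)\<^sup>2 / (2 * s)"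
proof -
  have "dist (closest_point S (y + (1 / s) *\<^sub>R g)) u \<le> dist (y + (1 / s) *\<^sub>R g) u"
    using closest_point_lipschitz[OF assms(1-3), of "y + (1 / s) *\<^sub>R g" u]
    by (simp add: closest_point_self[OF assms(4)])
  then have "(norm (closest_point S (y + (1 / s) *\<^sub>R g) - u))\<^sup>2 \<le> (norm ((y - u) + (1 / s) *\<^sub>R g))\<^sup>2"
    unfolding dist_norm by (simp add: power_mono algebra_simps)
  also have "\<dots> = (norm (y - u))\<^sup>2 + 2 / s * (g \<bullet> (y - u)) + (norm g)\<^sup>2 / s\<^sup>2"
    unfolding power2_norm_eq_inner inner_add_left inner_add_right
    by (simp add: inner_commute power2_eq_square)
  finally show ?thesis
    using assms(5) by (simp add: field_simps power2_eq_square inner_diff_right)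
qed

lemma div_sqrt_le_sqrt_increment:
  assumes "0 \<le> G" "0 \<le> a"
  shows "a / (2 * sqrt (2 * (G + a))) \<le> (sqrt (2 * (G + a)) - sqrt (2 * G)) / 2"
proof -
  define s s' where "s = sqrt (2 * G)" and "s' = sqrt (2 * (G + a))"
  have s: "0 \<le> s" "s \<le> s'" using assms unfolding s_def s'_def by auto
  moreover have "2 * a = (s' - s) * (s' + s)"
    using assms unfolding s_def s'_def by (simp add: algebra_simps power2_eq_square[symmetric])
  ultimately have "2 * a \<le> (s' - s) * (2 * s')"
    by (metis add_left_mono diff_ge_0_iff_ge mult_left_mono mult_2)
  then show ?thesis
    unfolding s'_def[symmetric] s_def[symmetric] using s assms(2)
    by (cases "s' = 0") (simp_all add: divide_simps mult.commute)
qed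

(* Potential argument: sqrt (2 * G t) * ||X (t + 1) - u||^2 / 2 absorbs the telescoping distance
   terms, and raising the weight sqrt (2 * G t) costs at most (D + 1) / 2 times the increase. *)
lemma adaptive_projected_gradient_regret:
  fixes X g :: "nat \<Rightarrow> 'a::{real_inner,heine_borel}" and G :: "nat \<Rightarrow> real"
  assumes S: "convex S" "closed S" "S \<noteq> {}"
    and diam: "\<And>v w. v \<in> S \<Longrightarrow> w \<in> S \<Longrightarrow> (norm (v - w))\<^sup>2 \<le> D"
    and G_0: "G 0 = 0" and G_Suc: "\<And>t. G (Suc t) = G t + (norm (g (Suc t)))\<^sup>2"
    and X_1: "X 1 \<in> S"
    and X_Suc: "\<And>t. 1 \<le> t \<Longrightarrow> X (Suc t) = closest_point S (X t + (1 / sqrt (2 * G t)) *\<^sub>R g t)"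
    and u: "u \<in> S"
  shows "(\<Sum>\<tau>=1..t. g \<tau> \<bullet> (u - X \<tau>)) + sqrt (2 * G t) * (norm (X (Suc t) - u))\<^sup>2 / 2
           \<le> (D + 1) / 2 * sqrt (2 * G t)"
proof (induction t)
  case 0
  then show ?case by (simp add: G_0)
next
  case (Suc t)
  have X_in: "X (Suc n) \<in> S" for n
    by (induction n) (use X_1 S in \<open>simp_all add: X_Suc closest_point_in_set\<close>)
  have G_nonneg: "0 \<le> G n" for n
    by (induction n) (simp_all add: G_0 G_Suc)
  define s s' where "s = sqrt (2 * G t)" and "s' = sqrt (2 * G (Suc t))"
  define d d' where "d = (norm (X (Suc t) - u))\<^sup>2" and "d' = (norm (X (Suc (Suc t)) - u))\<^sup>2"
  have "s \<le> s'" unfolding s_def s'_def by (simp add: G_Suc)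
  have "d \<le> D" unfolding d_def using X_in u by (rule diam)
  have "(norm (g (Suc t)))\<^sup>2 / (2 * s') \<le> (s' - s) / 2"
    unfolding s_def s'_def G_Suc using G_nonneg by (rule div_sqrt_le_sqrt_increment) simp
  moreover have "g (Suc t) \<bullet> (u - X (Suc t)) \<le> s' / 2 * (d - d') + (norm (g (Suc t)))\<^sup>2 / (2 * s')"
  proof (cases "s' = 0")
    case True
    then have "g (Suc t) = 0"
      unfolding s'_def G_Suc using G_nonneg[of t] by (simp add: add_nonneg_eq_0_iff)
    then show ?thesis using True by simp
  next
    case False
    then have "0 < s'" unfolding s'_def using G_nonneg[of "Suc t"] by simp
    then show ?thesis
      unfolding d_def d'_def X_Suc[of "Suc t", simplified] s'_def[symmetric]
      using projected_gradient_step[OF S u] by blast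
  qed
  ultimately have "(\<Sum>\<tau>=1..Suc t. g \<tau> \<bullet> (u - X \<tau>)) + s' * d' / 2
      \<le> ((\<Sum>\<tau>=1..t. g \<tau> \<bullet> (u - X \<tau>)) + s * d / 2) + (s' - s) * d / 2 + (s' - s) / 2"
    by (simp add: field_simps)
  also have "\<dots> \<le> (D + 1) / 2 * s + (s' - s) * D / 2 + (s' - s) / 2"
    using Suc.IH \<open>s \<le> s'\<close> \<open>d \<le> D\<close> unfolding s_def d_def
    by (intro add_mono mult_left_mono divide_right_mono mult_right_mono) auto
  finally show ?case unfolding s'_def d'_def by (simp add: field_simps s_def)
qed

lemma self_bounding_constant:
  fixes A B :: real
  assumes "0 \<le> A" "0 \<le> B"
  shows "A * (A + B + 1) + B \<le> (A + B + 1)\<^sup>2"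
proof -
  have "0 \<le> A * B" "0 \<le> B * B" using assms by simp_all
  with assms show ?thesis by (simp add: power2_eq_square algebra_simps)
qed

lemma quarter_power_budget:
  fixes T :: nat and A b C N V :: real
  assumes "1 \<le> T" and nonneg: "0 \<le> A" "0 \<le> b" "0 \<le> C" "0 \<le> N" "0 \<le> V"
    and V: "V \<le> b * sqrt T" and C: "A * C + (A * b + 2 * b + N) \<le> C\<^sup>2"
  shows "A * sqrt T * (C * T powr (3/4) + V) + (2 * V + N) * T \<le> (C * T powr (3/4))\<^sup>2"
proof -
  define w where "w = T powr (1/4)"
  have "0 < real T" using assms(1) by simp
  then have w_pow: "w ^ n = T powr (n / 4)" for n
    unfolding w_def by (simp add: powr_powr powr_realpow[symmetric])
  have "1 \<le> w" unfolding w_def using assms(1) by (simp add: ge_one_powr_ge_zero)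
  then have w_mono: "w ^ 4 \<le> w ^ 6" "w ^ 5 \<le> w ^ 6" by (simp_all add: power_increasing)
  have T: "sqrt T = w ^ 2" "real T = w ^ 4" "T powr (3/4) = w ^ 3"
    using w_pow[of 2] w_pow[of 4] w_pow[of 3] \<open>0 < real T\<close> by (simp_all add: powr_half_sqrt)
  have "A * sqrt T * (C * T powr (3/4) + V) + (2 * V + N) * T
        \<le> A * w ^ 2 * (C * w ^ 3 + b * w ^ 2) + (2 * (b * w ^ 2) + N) * w ^ 4"
    using nonneg V unfolding T(1,3) unfolding T(2) by (intro add_mono mult_left_mono mult_right_mono) auto
  also have "\<dots> = A * C * w ^ 5 + (A * b + N) * w ^ 4 + 2 * b * w ^ 6"
    by (simp add: algebra_simps eval_nat_numeral)
  also have "\<dots> \<le> A * C * w ^ 6 + (A * b + N) * w ^ 6 + 2 * b * w ^ 6"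
    using nonneg w_mono by (intro add_mono mult_left_mono) auto
  also have "\<dots> = (A * C + (A * b + 2 * b + N)) * w ^ 6"
    by (simp add: algebra_simps)
  also have "\<dots> \<le> C\<^sup>2 * w ^ 6"
    using C by (rule mult_right_mono) simp
  also have "\<dots> = (C * T powr (3/4))\<^sup>2"
    unfolding T(3) by (simp add: power_mult_distrib flip: power_mult)
  finally show ?thesis .
qed

locale banditq_run =
  fixes P :: "'n::finite set" and lam :: "'n \<Rightarrow> real" and V :: real
    and r :: "nat \<Rightarrow> real^'n" and x1 :: "real^'n"
  assumes V_nonneg: "0 \<le> V"
    and lam_bounds: "\<And>i. i \<in> P \<Longrightarrow> 0 \<le> lam i \<and> lam i \<le> 1"
    and reward_bounds: "\<And>t i. 1 \<le> t \<Longrightarrow> 0 \<le> r t $ i \<and> r t $ i \<le> 1"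
    and x1_in_simplex: "x1 \<in> prob_simplex"
begin

abbreviation "X \<equiv> banditq_x P lam V r x1"
abbreviation "Q \<equiv> banditq_Q P lam V r x1"

(* surrogate t is the paper's r'(t), and G t = sum of ||r'(tau)||^2 over tau <= t. *)
definition G :: "nat \<Rightarrow> real" where
  "G t = snd (snd (banditq_state P lam V r x1 t))"

definition surrogate :: "nat \<Rightarrow> real^'n" where
  "surrogate t = (\<chi> i. (Q (t - 1) i + V) * r t $ i)"

lemma banditq_state_eq: "banditq_state P lam V r x1 t = (X (Suc t), Q t, G t)"
  by (simp add: banditq_x_def banditq_Q_def G_def)

lemma banditq_state_Suc:
  "banditq_state P lam V r x1 (Suc t) =
     (let g = surrogate (Suc t); G' = G t + (norm g)\<^sup>2
      in (closest_point prob_simplex (X (Suc t) + (1 / sqrt (2 * G')) *\<^sub>R g),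
          (\<lambda>i. if i \<in> P then max 0 (Q t i + lam i - r (Suc t) $ i * X (Suc t) $ i) else 0),
          G'))"
  by (simp add: banditq_state_eq[of t] surrogate_def Let_def)

lemma X_1: "X (Suc 0) = x1"
  by (simp add: banditq_x_def)

lemma G_0: "G 0 = 0"
  by (simp add: G_def)

lemma G_Suc: "G (Suc t) = G t + (norm (surrogate (Suc t)))\<^sup>2"
  unfolding G_def[of "Suc t"] banditq_state_Suc Let_def by simp

lemma X_Suc:
  assumes "1 \<le> t"
  shows "X (Suc t) = closest_point prob_simplex (X t + (1 / sqrt (2 * G t)) *\<^sub>R surrogate t)"
proof -
  obtain n where t: "t = Suc n" using assms by (cases t) auto
  have "X (Suc t) = fst (banditq_state P lam V r x1 t)"
    by (simp add: banditq_x_def del: banditq_state.simps)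
  then show ?thesis
    unfolding t banditq_state_Suc G_Suc Let_def by simp
qed

lemma Q_0: "Q 0 i = 0"
  by (simp add: banditq_Q_def)

lemma Q_Suc:
  "Q (Suc t) i = (if i \<in> P then max 0 (Q t i + lam i - r (Suc t) $ i * X (Suc t) $ i) else 0)"
  unfolding banditq_Q_def[of _ _ _ _ _ "Suc t"] banditq_state_Suc Let_def by simp

lemma X_in_simplex: "1 \<le> t \<Longrightarrow> X t \<in> prob_simplex"
  by (induction t rule: dec_induct)
    (simp_all add: X_1 x1_in_simplex X_Suc closest_point_in_set closed_prob_simplex prob_simplex_nonempty)

lemma Q_nonneg: "0 \<le> Q t i"
  by (induction t) (simp_all add: Q_0 Q_Suc)

lemma Q_notin: "i \<notin> P \<Longrightarrow> Q t i = 0"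
  by (cases t) (simp_all add: Q_0 Q_Suc)

lemma G_nonneg: "0 \<le> G t"
  by (induction t) (simp_all add: G_0 G_Suc)

lemma surrogate_regret:
  assumes "u \<in> prob_simplex"
  shows "(\<Sum>\<tau>=1..t. surrogate \<tau> \<bullet> (u - X \<tau>)) \<le> 3 / 2 * sqrt (2 * G t)"
proof -
  have "(\<Sum>\<tau>=1..t. surrogate \<tau> \<bullet> (u - X \<tau>)) + sqrt (2 * G t) * (norm (X (Suc t) - u))\<^sup>2 / 2
          \<le> 3 / 2 * sqrt (2 * G t)"
    by (rule order_trans[OF adaptive_projected_gradient_regret[where
      S = prob_simplex and D = 2 and G = G and g = surrogate and X = X and u = u]])
      (use assms in \<open>simp_all add: convex_prob_simplex closed_prob_simplex prob_simplex_nonempty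
        prob_simplex_dist_power2_le_2 G_0 G_Suc X_1 x1_in_simplex X_Suc\<close>)
  moreover have "0 \<le> sqrt (2 * G t) * (norm (X (Suc t) - u))\<^sup>2 / 2"
    using G_nonneg[of t] by simp
  ultimately show ?thesis by linarith
qed

lemma queue_power2_Suc_le:
  assumes "u \<in> feasible_set P lam r"
  shows "(Q (Suc t) i)\<^sup>2 \<le> (Q t i)\<^sup>2 + 2 * (Q t i * (r (Suc t) $ i * (u $ i - X (Suc t) $ i))) + 1"
proof (cases "i \<in> P")
  case False
  then show ?thesis by (simp add: Q_Suc Q_notin)
next
  case True
  define y where "y = lam i - r (Suc t) $ i * X (Suc t) $ i"
  have "lam i \<le> r (Suc t) $ i * u $ i"
    using assms True unfolding feasible_set_def by auto
  then have y_le: "y \<le> r (Suc t) $ i * (u $ i - X (Suc t) $ i)"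
    unfolding y_def by (simp add: algebra_simps)
  have "0 \<le> r (Suc t) $ i * X (Suc t) $ i" "r (Suc t) $ i * X (Suc t) $ i \<le> 1"
    using reward_bounds[of "Suc t" i] prob_simplex_nonneg[OF X_in_simplex, of "Suc t" i]
      prob_simplex_le_1[OF X_in_simplex, of "Suc t" i]
    by (simp_all add: mult_le_one)
  then have y_sq: "y\<^sup>2 \<le> 1"
    unfolding y_def using lam_bounds[OF True] by (subst abs_square_le_1) auto
  have "(Q (Suc t) i)\<^sup>2 = (max 0 (Q t i + y))\<^sup>2"
    using True by (simp add: Q_Suc y_def algebra_simps)
  also have "\<dots> \<le> (Q t i + y)\<^sup>2"
    by (cases "0 \<le> Q t i + y") (auto simp: max_def)
  also have "\<dots> = (Q t i)\<^sup>2 + 2 * (Q t i * y) + y\<^sup>2"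
    by (simp add: power2_sum)
  also have "\<dots> \<le> (Q t i)\<^sup>2 + 2 * (Q t i * (r (Suc t) $ i * (u $ i - X (Suc t) $ i))) + 1"
    using Q_nonneg y_le y_sq by (intro add_mono mult_left_mono) auto
  finally show ?thesis .
qed

lemma inner_surrogate_Suc:
  "surrogate (Suc t) \<bullet> v = (\<Sum>i\<in>UNIV. Q t i * (r (Suc t) $ i * v $ i)) + V * (r (Suc t) \<bullet> v)"
  by (simp add: surrogate_def inner_vec_def algebra_simps sum.distrib sum_distrib_left)

lemma queue_energy_le_regret:
  assumes u: "u \<in> feasible_set P lam r"
  shows "(\<Sum>i\<in>UNIV. (Q t i)\<^sup>2)
           \<le> 2 * (\<Sum>\<tau>=1..t. surrogate \<tau> \<bullet> (u - X \<tau>)) + (2 * V + CARD('n)) * t"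
proof (induction t)
  case 0
  then show ?case by (simp add: Q_0)
next
  case (Suc t)
  let ?r = "r (Suc t)" and ?d = "u - X (Suc t)"
  have "- 1 \<le> ?r \<bullet> ?d"
    using u reward_bounds X_in_simplex unfolding feasible_set_def
    by (intro prob_simplex_inner_diff_ge) auto
  then have V_gap: "- V \<le> V * (?r \<bullet> ?d)"
    using V_nonneg by (metis mult.right_neutral mult_left_mono mult_minus_right)
  have "(\<Sum>i\<in>UNIV. (Q (Suc t) i)\<^sup>2) \<le> (\<Sum>i\<in>UNIV. (Q t i)\<^sup>2 + 2 * (Q t i * (?r $ i * ?d $ i)) + 1)"
    using queue_power2_Suc_le[OF u] by (intro sum_mono) simp
  also have "\<dots> = (\<Sum>i\<in>UNIV. (Q t i)\<^sup>2) + 2 * (surrogate (Suc t) \<bullet> ?d) - 2 * (V * (?r \<bullet> ?d)) + CARD('n)"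
    by (simp add: inner_surrogate_Suc sum.distrib sum_distrib_left)
  also have "\<dots> \<le> 2 * (\<Sum>\<tau>=1..Suc t. surrogate \<tau> \<bullet> (u - X \<tau>)) + (2 * V + CARD('n)) * Suc t"
    using Suc.IH V_gap by (simp add: algebra_simps)
  finally show ?case .
qed

lemma queue_energy_le:
  assumes "u \<in> feasible_set P lam r"
  shows "(\<Sum>i\<in>UNIV. (Q t i)\<^sup>2) \<le> 3 * sqrt (2 * G t) + (2 * V + CARD('n)) * t"
  using queue_energy_le_regret[OF assms, of t] surrogate_regret[of u t] assms
  unfolding feasible_set_def by auto

lemma G_le:
  assumes "\<And>\<tau> i. \<tau> < t \<Longrightarrow> Q \<tau> i \<le> K"
  shows "G t \<le> t * CARD('n) * (K + V)\<^sup>2"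
  using assms
proof (induction t)
  case 0
  then show ?case by (simp add: G_0)
next
  case (Suc t)
  have "((Q t i + V) * r (Suc t) $ i)\<^sup>2 \<le> (K + V)\<^sup>2" for i
  proof -
    have "(Q t i + V) * r (Suc t) $ i \<le> Q t i + V"
      using Q_nonneg[of t i] V_nonneg reward_bounds[of "Suc t" i] by (simp add: mult_left_le)
    also have "\<dots> \<le> K + V" using Suc.prems[of t i] by simp
    finally show ?thesis
      using Q_nonneg[of t i] V_nonneg reward_bounds[of "Suc t" i] by (intro power_mono) auto
  qed
  then have "(norm (surrogate (Suc t)))\<^sup>2 \<le> CARD('n) * (K + V)\<^sup>2"
    using sum_mono[of UNIV "\<lambda>i. ((Q t i + V) * r (Suc t) $ i)\<^sup>2" "\<lambda>_. (K + V)\<^sup>2"]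
    by (simp add: norm_vec_power2 surrogate_def)
  then show ?case
    using Suc by (simp add: G_Suc algebra_simps)
qed

lemma queue_le_of_budget:
  assumes u: "u \<in> feasible_set P lam r" and K: "0 \<le> K"
    and budget: "3 * sqrt (2 * CARD('n) * T) * (K + V) + (2 * V + CARD('n)) * T \<le> K\<^sup>2"
    and "t \<le> T"
  shows "Q t i \<le> K"
  using \<open>t \<le> T\<close>
proof (induction t arbitrary: i rule: less_induct)
  case (less t)
  have "G t \<le> t * CARD('n) * (K + V)\<^sup>2"
    using less by (intro G_le) auto
  also have "\<dots> \<le> T * CARD('n) * (K + V)\<^sup>2"
    using less.prems by (intro mult_right_mono) auto
  also have "\<dots> = (sqrt (2 * CARD('n) * T))\<^sup>2 * (K + V)\<^sup>2 / 2"
    by (subst real_sqrt_pow2) auto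
  also have "\<dots> = (sqrt (2 * CARD('n) * T) * (K + V))\<^sup>2 / 2"
    by (simp only: power_mult_distrib)
  finally have "2 * G t \<le> (sqrt (2 * CARD('n) * T) * (K + V))\<^sup>2"
    by linarith
  then have "sqrt (2 * G t) \<le> sqrt (2 * CARD('n) * T) * (K + V)"
    by (rule real_le_lsqrt[rotated]) (use K V_nonneg in simp)
  moreover have "(2 * V + CARD('n)) * t \<le> (2 * V + CARD('n)) * T"
    using less.prems V_nonneg by (intro mult_left_mono) auto
  ultimately have "(\<Sum>j\<in>UNIV. (Q t j)\<^sup>2) \<le> K\<^sup>2"
    using queue_energy_le[OF u, of t] budget by linarith
  moreover have "(Q t i)\<^sup>2 \<le> (\<Sum>j\<in>UNIV. (Q t j)\<^sup>2)"
    by (rule member_le_sum) auto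
  ultimately have "(Q t i)\<^sup>2 \<le> K\<^sup>2"
    by linarith
  then show ?case
    using K by (rule power2_le_imp_le)
qed

end

definition banditq_queue_constant :: "nat \<Rightarrow> real \<Rightarrow> real" where
  "banditq_queue_constant n b = 3 * sqrt (2 * n) * (1 + b) + 2 * b + n + 1"

lemma banditq_queue_le_T_powr:
  fixes P :: "'n::finite set" and r :: "nat \<Rightarrow> real^'n" and T :: nat
  assumes "1 \<le> T" "0 \<le> b" "0 \<le> V" "V \<le> b * sqrt T"
    and "\<forall>i\<in>P. 0 \<le> lam i \<and> lam i \<le> 1" "\<forall>t\<ge>1. \<forall>i. 0 \<le> r t $ i \<and> r t $ i \<le> 1"
    and "x1 \<in> prob_simplex" "feasible_set P lam r \<noteq> {}" "t \<le> T"
  shows "banditq_Q P lam V r x1 t i \<le> banditq_queue_constant CARD('n) b * T powr (3/4)"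
proof -
  interpret banditq_run P lam V r x1
    by unfold_locales (use assms in auto)
  obtain u where u: "u \<in> feasible_set P lam r"
    using assms(8) by auto
  define A C where "A = 3 * sqrt (2 * CARD('n))" and "C = banditq_queue_constant CARD('n) b"
  have "0 \<le> A" "0 \<le> C" unfolding A_def C_def banditq_queue_constant_def using assms(2) by simp_all
  moreover have "A * C + (A * b + 2 * b + CARD('n)) \<le> C\<^sup>2"
    unfolding C_def banditq_queue_constant_def A_def[symmetric]
    using self_bounding_constant[of A "A * b + 2 * b + CARD('n)"] \<open>0 \<le> A\<close> assms(2)
    by (simp add: algebra_simps)
  ultimately have "A * sqrt T * (C * T powr (3/4) + V) + (2 * V + CARD('n)) * T \<le> (C * T powr (3/4))\<^sup>2"
    using assms by (intro quarter_power_budget) auto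
  moreover have "A * sqrt T = 3 * sqrt (2 * CARD('n) * T)"
    unfolding A_def by (simp add: real_sqrt_mult)
  ultimately show ?thesis
    unfolding C_def[symmetric]
    using u assms(9) \<open>0 \<le> C\<close> by (intro queue_le_of_budget) auto
qed

theorem proposition1:
  fixes a b :: real
  assumes "0 < a" and "a \<le> b"
  shows "\<exists>C::real. \<forall>(T::nat) (V::real) (P::'n::finite set) (lam::'n \<Rightarrow> real)
            (r::nat \<Rightarrow> real^'n) (x1::real^'n).
     1 \<le> T \<and> a * sqrt (real T) \<le> V \<and> V \<le> b * sqrt (real T)
     \<and> (\<forall>i\<in>P. 0 \<le> lam i \<and> lam i \<le> 1) \<and> (\<forall>i. i \<notin> P \<longrightarrow> lam i = 0)
     \<and> (\<Sum>i\<in>P. lam i) \<le> 1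
     \<and> (\<forall>t\<ge>1. \<forall>i. 0 \<le> r t $ i \<and> r t $ i \<le> 1)
     \<and> x1 \<in> prob_simplex
     \<and> feasible_set P lam r \<noteq> {}
     \<longrightarrow> (\<forall>i\<in>P. \<forall>t\<in>{1..T}. banditq_Q P lam V r x1 t i \<le> C * real T powr (3/4))"
proof -
  (* Of the hypotheses on V only V >= 0 matters. *)
  have "0 \<le> b" and "\<And>T V. a * sqrt (real T) \<le> V \<Longrightarrow> 0 \<le> V"
    using assms by (auto intro: order_trans[rotated])
  then show ?thesis
    by (intro exI[of _ "banditq_queue_constant CARD('n) b"] allI impI ballI)
      (auto intro!: banditq_queue_le_T_powr)
qed

end
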